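(* Fix $a(x)=|x|^{-\alpha}$ for $x\in\mathbb{Z}_{\neq0}$ and real $\alpha>3/2$, and for $\Delta\in\mathbb{R}$ let $$\tau_{\mathrm{eff}}^{-1}(\alpha,\Delta)=\frac12\sqrt{\frac{A(\alpha)\Delta^2+2B(\alpha)\Delta+C(\alpha)}{\sum_{n\neq0}n^2a(n)^2}},$$ with $A,B,C$ as below. Let $\Delta=\Delta(\alpha)$ satisfy $c^{\alpha}\Delta(\alpha)\to k$ as $\alpha\to\infty$, for constants $c>1$ and $k\in\mathbb{R}$. Then, as $\alpha\to\infty$: (i) if $1<c<2$ and $k\neq0$, then $\tau_{\mathrm{eff}}^{-1}(\alpha,\Delta(\alpha))\big/\bigl(|\Delta(\alpha)|/\sqrt2\bigr)\to1$; (ii) if $c=2$, then $2^{\alpha}\tau_{\mathrm{eff}}^{-1}(\alpha,\Delta(\alpha))\to\sqrt{\bigl((k-3)^2+1\bigr)/2}$, equivalently $\tau_{\mathrm{eff}}^{-1}\sim\sqrt{(\Delta^2-6\cdot2^{-\alpha}\Delta+10\cdot4^{-\alpha})/2}$; (iii) if $c>2$, then $2^{\alpha}\tau_{\mathrm{eff}}^{-1}(\alpha,\Delta(\alpha))\to\sqrt5$. In particular $2^{\alpha}\tau_{\mathrm{eff}}^{-1}(\alpha,\Delta^*(\alpha))\to1/\sqrt2$, where $\Delta^*(\alpha)=-B(\alpha)/A(\alpha)$, while $2^{\alpha}\tau_{\mathrm{eff}}^{-1}(\alpha,e^{2-\alpha})\to\sqrt5$.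
   Context: Here, with $a(x)=|x|^{-\alpha}$ and all sums over $u,v\in\mathbb{Z}_{\neq0}$ with $u+v\neq0$: $A=\sum(u+v)^2a(u+v)^2(a(u)-a(v))^2$, $B=\sum(u^2-v^2)a(u)a(v)a(u+v)(a(u)-a(v))$, $C=\sum(u-v)^2a(u)^2a(v)^2$. The quantity $\tau_{\mathrm{eff}}^{-1}$ is the estimated decay rate of the spin current of the XXZ chain with couplings $a(r)$ and $b(r)=\Delta a(r)$. *)

theory Defs
  imports "HOL-Analysis.Analysis"
begin

definition acoup :: "real \<Rightarrow> int \<Rightarrow> real" where
  "acoup \<alpha> x = \<bar>real_of_int x\<bar> powr (- \<alpha>)"

definition idxUV :: "(int \<times> int) set" where
  "idxUV = {(u, v). u \<noteq> 0 \<and> v \<noteq> 0 \<and> u + v \<noteq> 0}"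

definition coefA :: "real \<Rightarrow> real" where
  "coefA \<alpha> = (\<Sum>\<^sub>\<infinity>(u, v)\<in>idxUV.
     (real_of_int (u + v))\<^sup>2 * (acoup \<alpha> (u + v))\<^sup>2 * (acoup \<alpha> u - acoup \<alpha> v)\<^sup>2)"

definition coefB :: "real \<Rightarrow> real" where
  "coefB \<alpha> = (\<Sum>\<^sub>\<infinity>(u, v)\<in>idxUV.
     (real_of_int u ^ 2 - real_of_int v ^ 2) * acoup \<alpha> u * acoup \<alpha> v * acoup \<alpha> (u + v)
       * (acoup \<alpha> u - acoup \<alpha> v))"

definition coefC :: "real \<Rightarrow> real" where
  "coefC \<alpha> = (\<Sum>\<^sub>\<infinity>(u, v)\<in>idxUV.
     (real_of_int (u - v))\<^sup>2 * (acoup \<alpha> u)\<^sup>2 * (acoup \<alpha> v)\<^sup>2)"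

definition normS :: "real \<Rightarrow> real" where
  "normS \<alpha> = (\<Sum>\<^sub>\<infinity>n\<in>{n::int. n \<noteq> 0}. (real_of_int n)\<^sup>2 * (acoup \<alpha> n)\<^sup>2)"

definition tau_eff_inv :: "real \<Rightarrow> real \<Rightarrow> real" where
  "tau_eff_inv \<alpha> \<Delta> = (1/2) * sqrt ((coefA \<alpha> * \<Delta>\<^sup>2 + 2 * coefB \<alpha> * \<Delta> + coefC \<alpha>) / normS \<alpha>)"

end

theory Submission
  imports Defs "HOL-Real_Asymp.Real_Asymp"
begin

text \<open>
  For |m| \<ge> q > 0 the rescaled coupling q^alpha a(m) = (q/|m|)^alpha tends to 1 if |m| = q
  and to 0 otherwise as alpha \<rightarrow> \<infinity>, and it is at most (q/m)^2 once alpha \<ge> 2.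
  Since a is multiplicative, every summand of normS, A, 2^alpha B and 4^alpha C is built from
  such rescaled couplings (with q = 1, 1, 2, 2), and for alpha \<ge> 2 it is bounded by a constant
  times 1/(uv)^2, a summable majorant: by |u| \<le> 2 |v| |u+v| and its symmetric variants each
  |u|, |v|, |u+v| is controlled by the product of the other two. Dominated convergence thus
  gives normS \<rightarrow> 2, A \<rightarrow> 4, 2^alpha B \<rightarrow> -12 and 4^alpha C \<rightarrow> 40, each limit being a finite
  sum over |u|, |v| \<le> 2. As
    2^alpha tau_eff^-1(alpha, Delta)
      = 1/2 sqrt ((A (2^alpha Delta)^2 + 2 (2^alpha B) (2^alpha Delta) + 4^alpha C) / normS),
  2^alpha Delta \<rightarrow> x forces 2^alpha tau_eff^-1 \<rightarrow> sqrt (((x - 3)^2 + 1) / 2), while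
  2^alpha Delta \<rightarrow> \<infinity> forces tau_eff^-1 / |Delta| \<rightarrow> sqrt (A / normS) / 2 = 1 / sqrt 2.
  The five claims follow by writing 2^alpha Delta = (2/c)^alpha c^alpha Delta.
\<close>

lemma tendsto_powr_at_top_zero:
  fixes b :: real
  shows "0 < b \<Longrightarrow> b < 1 \<Longrightarrow> ((\<lambda>\<alpha>. b powr \<alpha>) \<longlongrightarrow> 0) at_top"
  by real_asymp

lemma filterlim_powr_at_top:
  fixes b :: real
  shows "1 < b \<Longrightarrow> filterlim (\<lambda>\<alpha>. b powr \<alpha>) at_top at_top"
  by real_asymp

lemma four_powr: "(4::real) powr \<alpha> = (2 powr \<alpha>)\<^sup>2"
  by (simp add: power2_eq_square flip: powr_mult)

lemma abs_diff_le_two_mult: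
  fixes x y :: real
  assumes "1 \<le> \<bar>x\<bar>" "1 \<le> \<bar>y\<bar>"
  shows "\<bar>x - y\<bar> \<le> 2 * \<bar>x * y\<bar>"
proof -
  have "0 \<le> (\<bar>x\<bar> - 1) * (\<bar>y\<bar> - 1)" using assms by simp
  moreover have "1 \<le> \<bar>x\<bar> * \<bar>y\<bar>"
    using mult_mono[OF assms] by simp
  ultimately show ?thesis
    using abs_triangle_ineq4[of x y] by (simp add: abs_mult algebra_simps)
qed

lemma reciprocal_triangle:
  fixes x y :: real
  assumes "1 \<le> \<bar>x\<bar>" "1 \<le> \<bar>y\<bar>" "1 \<le> \<bar>x + y\<bar>"
  shows "1 / \<bar>x\<bar> * (1 / \<bar>x + y\<bar>) \<le> 2 * (1 / \<bar>y\<bar>)"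
    and "1 / \<bar>y\<bar> * (1 / \<bar>x + y\<bar>) \<le> 2 * (1 / \<bar>x\<bar>)"
    and "\<bar>x - y\<bar> * (1 / \<bar>x\<bar>) * (1 / \<bar>y\<bar>) \<le> 2"
proof -
  have "\<bar>y\<bar> \<le> 2 * \<bar>(x + y) * x\<bar>"
    using abs_diff_le_two_mult[of "x + y" x] assms by simp
  with assms show "1 / \<bar>x\<bar> * (1 / \<bar>x + y\<bar>) \<le> 2 * (1 / \<bar>y\<bar>)"
    by (simp add: divide_simps abs_mult mult_ac)
  have "\<bar>x\<bar> \<le> 2 * \<bar>(x + y) * y\<bar>"
    using abs_diff_le_two_mult[of "x + y" y] assms by simp
  with assms show "1 / \<bar>y\<bar> * (1 / \<bar>x + y\<bar>) \<le> 2 * (1 / \<bar>x\<bar>)"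
    by (simp add: divide_simps abs_mult mult_ac)
  from assms show "\<bar>x - y\<bar> * (1 / \<bar>x\<bar>) * (1 / \<bar>y\<bar>) \<le> 2"
    using abs_diff_le_two_mult[of x y] by (simp add: divide_simps abs_mult mult_ac)
qed

lemma abs_le_abs_mult:
  fixes x y :: int
  shows "y \<noteq> 0 \<Longrightarrow> \<bar>x\<bar> \<le> \<bar>y * x\<bar>"
  using mult_right_mono[of 1 "\<bar>y\<bar>" "\<bar>x\<bar>"] by (simp add: abs_mult)

lemma abs_of_int_neq_two: "3 \<le> \<bar>k\<bar> \<Longrightarrow> \<bar>real_of_int k\<bar> \<noteq> 2"
  by (simp flip: of_int_abs)

section \<open>Dominated convergence for unordered sums\<close>

lemma tendsto_infsum_dominated:
  fixes f :: "real \<Rightarrow> 'a \<Rightarrow> real"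
  assumes G: "G summable_on S"
    and lim: "\<And>x. x \<in> S \<Longrightarrow> ((\<lambda>\<alpha>. f \<alpha> x) \<longlongrightarrow> L x) at_top"
    and bound: "\<forall>\<^sub>F \<alpha> in at_top. \<forall>x\<in>S. \<bar>f \<alpha> x\<bar> \<le> G x"
  shows "((\<lambda>\<alpha>. infsum (f \<alpha>) S) \<longlongrightarrow> infsum L S) at_top"
proof -
  obtain \<alpha>\<^sub>0 where \<alpha>\<^sub>0: "\<And>\<alpha> x. \<alpha> \<ge> \<alpha>\<^sub>0 \<Longrightarrow> x \<in> S \<Longrightarrow> \<bar>f \<alpha> x\<bar> \<le> G x"
    using bound by (auto simp: eventually_at_top_linorder)
  have "(\<lambda>x. norm (G x)) summable_on S"
    by (rule summable_on_cong[THEN iffD2, OF _ G]) (use \<alpha>\<^sub>0[OF order.refl] in force)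
  then have G_abs: "Infinite_Set_Sum.abs_summable_on G S"
    using abs_summable_equivalent by blast
  have L_le: "\<bar>L x\<bar> \<le> G x" if "x \<in> S" for x
  proof (rule tendsto_le[OF _ tendsto_const tendsto_rabs[OF lim[OF that]]])
    show "\<forall>\<^sub>F \<alpha> in at_top. \<bar>f \<alpha> x\<bar> \<le> G x"
      using eventually_ge_at_top[of \<alpha>\<^sub>0] by eventually_elim (use \<alpha>\<^sub>0 that in blast)
  qed simp
  have integral_eq: "integral\<^sup>L (count_space S) g = infsum g S"
    if "\<And>x. x \<in> S \<Longrightarrow> \<bar>g x\<bar> \<le> G x" for g
  proof -
    have "Infinite_Set_Sum.abs_summable_on g S"
      by (rule abs_summable_on_comparison_test'[OF G_abs]) (use that in auto)
    then show ?thesis by (simp add: infsetsum_def[symmetric] infsetsum_infsum)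
  qed
  have "((\<lambda>\<alpha>. integral\<^sup>L (count_space S) (f \<alpha>)) \<longlongrightarrow> integral\<^sup>L (count_space S) L) at_top"
  proof (rule integral_dominated_convergence_at_top[where w = G])
    show "integrable (count_space S) G"
      using G_abs by (simp add: abs_summable_on_def)
    show "AE x in count_space S. ((\<lambda>\<alpha>. f \<alpha> x) \<longlongrightarrow> L x) at_top"
      using lim by (simp add: AE_count_space)
    show "\<forall>\<^sub>F \<alpha> in at_top. AE x in count_space S. norm (f \<alpha> x) \<le> G x"
      using bound by (auto simp: AE_count_space elim!: eventually_mono)
  qed auto
  moreover have "\<forall>\<^sub>F \<alpha> in at_top. integral\<^sup>L (count_space S) (f \<alpha>) = infsum (f \<alpha>) S"
    using eventually_ge_at_top[of \<alpha>\<^sub>0] by eventually_elim (simp add: integral_eq \<alpha>\<^sub>0)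
  ultimately show ?thesis
    using integral_eq[OF L_le] by (auto intro: Lim_transform_eventually)
qed

lemma summable_on_inverse_square_int:
  "(\<lambda>n::int. 1 / (real_of_int n)\<^sup>2) summable_on {n. n \<noteq> 0}"
proof -
  let ?f = "\<lambda>n::int. 1 / (real_of_int n)\<^sup>2"
  have "(\<lambda>n::nat. 1 / (real n)\<^sup>2) summable_on UNIV"
    using inverse_power_summable[of 2, where 'a = real]
    by (subst summable_on_UNIV_nonneg_real_iff) (simp_all add: inverse_eq_divide)
  then have "?f summable_on range int" "?f summable_on range (uminus \<circ> int)"
    by (subst summable_on_reindex; simp add: o_def inj_def)+
  then have "?f summable_on range int \<union> range (uminus \<circ> int)"
    by (rule summable_on_union)
  moreover have "n \<in> range int \<union> range (uminus \<circ> int)" for n :: int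
    by (cases n rule: int_cases2) auto
  then have "{n. n \<noteq> 0} \<subseteq> range int \<union> range (uminus \<circ> int)"
    by blast
  ultimately show ?thesis by (rule summable_on_subset)
qed

lemma summable_on_inverse_square_idxUV:
  "(\<lambda>(u, v). c / (real_of_int u * real_of_int v)\<^sup>2) summable_on idxUV"
proof -
  define f :: "int \<Rightarrow> real" where "f n = 1 / (real_of_int n)\<^sup>2" for n
  have f: "f summable_on {n. n \<noteq> 0}"
    unfolding f_def by (rule summable_on_inverse_square_int)
  have f_nonneg: "0 \<le> f n" for n
    by (simp add: f_def)
  have "(\<lambda>(u, v). f u * f v) summable_on {n. n \<noteq> 0} \<times> {n. n \<noteq> 0}"
    by (rule summable_on_SigmaI[where g = "\<lambda>u. f u * infsum f {n. n \<noteq> 0}"])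
       (auto intro!: has_sum_cmult_right summable_on_cmult_left f has_sum_infsum
         mult_nonneg_nonneg f_nonneg)
  then have "(\<lambda>(u, v). f u * f v) summable_on idxUV"
    by (rule summable_on_subset) (auto simp: idxUV_def)
  then have "(\<lambda>z. c * (case z of (u, v) \<Rightarrow> f u * f v)) summable_on idxUV"
    by (rule summable_on_cmult_right)
  then show ?thesis
    by (rule summable_on_cong[THEN iffD1, rotated]) (auto simp: f_def power_mult_distrib)
qed

lemma abs_le_abs_product:
  assumes "(u, v) \<in> idxUV"
  shows "\<bar>u\<bar> \<le> \<bar>u * v\<bar>" "\<bar>v\<bar> \<le> \<bar>u * v\<bar>"
  using assms abs_le_abs_mult[of u v] abs_le_abs_mult[of v u] by (auto simp: idxUV_def mult.commute)

lemma eq_if_abs_product_less_two: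
  assumes "(u, v) \<in> idxUV" "\<bar>u * v\<bar> < 2"
  shows "u = v"
  using assms abs_le_abs_product[OF assms(1)] by (auto simp: idxUV_def)

lemma abs_le_abs_triple_product:
  assumes "(u, v) \<in> idxUV"
  shows "\<bar>u\<bar> \<le> \<bar>u * v * (u + v)\<bar>" "\<bar>v\<bar> \<le> \<bar>u * v * (u + v)\<bar>" "\<bar>u + v\<bar> \<le> \<bar>u * v * (u + v)\<bar>"
  using assms abs_le_abs_mult[of "v * (u + v)" u] abs_le_abs_mult[of "u * (u + v)" v]
    abs_le_abs_mult[of "u * v" "u + v"]
  by (auto simp: idxUV_def mult_ac)

lemma two_le_abs_triple_product:
  assumes "(u, v) \<in> idxUV"
  shows "2 \<le> \<bar>u * v * (u + v)\<bar>"
proof -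
  have "2 \<le> \<bar>u\<bar> \<or> 2 \<le> \<bar>v\<bar> \<or> 2 \<le> \<bar>u + v\<bar>"
    using assms by (auto simp: idxUV_def)
  then show ?thesis
    using abs_le_abs_triple_product[OF assms] by linarith
qed

lemma infsum_idxUV_eq_sum_small:
  assumes "\<And>u v. (u, v) \<in> idxUV \<Longrightarrow> 3 \<le> \<bar>u\<bar> \<or> 3 \<le> \<bar>v\<bar> \<Longrightarrow> f (u, v) = 0"
  shows "infsum f idxUV = sum f {(-2, -2), (-2, -1), (-2, 1), (-1, -2), (-1, -1), (-1, 2),
                                 (1, -2), (1, 1), (1, 2), (2, -1), (2, 1), (2, 2)}"
    (is "_ = sum f ?T")
proof -
  have outside: "f z = 0" if "z \<in> idxUV - ?T" for z
  proof -
    obtain u v where "z = (u, v)"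
      by (cases z)
    with that have z: "z = (u, v)" "(u, v) \<in> idxUV" "(u, v) \<notin> ?T"
      by simp_all
    have "\<not> (\<bar>u\<bar> \<le> 2 \<and> \<bar>v\<bar> \<le> 2)"
    proof
      assume "\<bar>u\<bar> \<le> 2 \<and> \<bar>v\<bar> \<le> 2"
      then have "u \<in> {-2, -1, 1, 2}" "v \<in> {-2, -1, 1, 2}" "u + v \<noteq> 0"
        using z(2) by (auto simp: idxUV_def)
      then show False using z(3) by auto
    qed
    then have "3 \<le> \<bar>u\<bar> \<or> 3 \<le> \<bar>v\<bar>"
      by linarith
    then show ?thesis
      using assms z(1,2) by simp
  qed
  have "?T - idxUV = {}"
    by (simp add: idxUV_def)
  then have "infsum f idxUV = infsum f ?T"
    by (intro infsum_cong_neutral outside) simp_all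
  then show ?thesis
    by simp
qed

section \<open>The coupling for large exponents\<close>

lemma acoup_nonneg: "0 \<le> acoup \<alpha> x"
  by (simp add: acoup_def)

lemma acoup_mult: "acoup \<alpha> (x * y) = acoup \<alpha> x * acoup \<alpha> y"
  by (simp add: acoup_def abs_mult powr_mult)

lemma scaled_acoup_eq:
  assumes "0 < q" "x \<noteq> 0"
  shows "q powr \<alpha> * acoup \<alpha> x = (q / \<bar>real_of_int x\<bar>) powr \<alpha>"
  using assms by (simp add: acoup_def powr_divide powr_minus_divide)

lemma tendsto_scaled_acoup:
  assumes "0 < q" "q \<le> \<bar>real_of_int x\<bar>"
  shows "((\<lambda>\<alpha>. q powr \<alpha> * acoup \<alpha> x) \<longlongrightarrow> of_bool (\<bar>real_of_int x\<bar> = q)) at_top"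
proof -
  have "x \<noteq> 0" using assms by auto
  show ?thesis
  proof (cases "\<bar>real_of_int x\<bar> = q")
    case True
    then show ?thesis using assms by (simp add: scaled_acoup_eq[OF assms(1) \<open>x \<noteq> 0\<close>])
  next
    case False
    with assms have "0 < q / \<bar>real_of_int x\<bar>" "q / \<bar>real_of_int x\<bar> < 1"
      by (auto simp: field_simps)
    then have "((\<lambda>\<alpha>. (q / \<bar>real_of_int x\<bar>) powr \<alpha>) \<longlongrightarrow> 0) at_top"
      by (rule tendsto_powr_at_top_zero)
    then show ?thesis using False by (simp add: scaled_acoup_eq[OF assms(1) \<open>x \<noteq> 0\<close>])
  qed
qed

lemma tendsto_acoup:
  "x \<noteq> 0 \<Longrightarrow> ((\<lambda>\<alpha>. acoup \<alpha> x) \<longlongrightarrow> of_bool (\<bar>x\<bar> = 1)) at_top"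
  using tendsto_scaled_acoup[of 1 x] by (simp flip: of_int_abs)

lemma scaled_acoup_le:
  assumes "0 < q" "q \<le> \<bar>real_of_int x\<bar>" "2 \<le> \<alpha>"
  shows "q powr \<alpha> * acoup \<alpha> x \<le> (q / real_of_int x)\<^sup>2"
proof -
  have "x \<noteq> 0" using assms by auto
  have "q powr \<alpha> * acoup \<alpha> x = (q / \<bar>real_of_int x\<bar>) powr \<alpha>"
    using assms \<open>x \<noteq> 0\<close> by (simp add: scaled_acoup_eq)
  also have "\<dots> \<le> (q / \<bar>real_of_int x\<bar>) powr 2"
    using assms by (intro powr_mono') auto
  finally show ?thesis using assms by (simp add: powr_realpow power_divide)
qed

lemma acoup_le: "x \<noteq> 0 \<Longrightarrow> 2 \<le> \<alpha> \<Longrightarrow> acoup \<alpha> x \<le> 1 / (real_of_int x)\<^sup>2"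
  using scaled_acoup_le[of 1 x \<alpha>] by (simp add: power_one_over)

section \<open>Limits of the coefficients\<close>

lemma normS_summand_le:
  assumes "n \<noteq> 0" "2 \<le> \<alpha>"
  shows "(real_of_int n)\<^sup>2 * (acoup \<alpha> n)\<^sup>2 \<le> 1 / (real_of_int n)\<^sup>2"
proof -
  have "(acoup \<alpha> n)\<^sup>2 \<le> (1 / (real_of_int n)\<^sup>2)\<^sup>2"
    using assms acoup_le acoup_nonneg by (intro power_mono) auto
  then have "(real_of_int n)\<^sup>2 * (acoup \<alpha> n)\<^sup>2 \<le> (real_of_int n)\<^sup>2 * (1 / (real_of_int n)\<^sup>2)\<^sup>2"
    by (rule mult_left_mono) simp
  also have "\<dots> = 1 / (real_of_int n)\<^sup>2"
    using assms by (simp add: power2_eq_square)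
  finally show ?thesis .
qed

lemma tendsto_normS: "(normS \<longlongrightarrow> 2) at_top"
proof -
  define L where "L n = (real_of_int n)\<^sup>2 * (of_bool (\<bar>n\<bar> = 1))\<^sup>2" for n :: int
  have "(normS \<longlongrightarrow> infsum L {n. n \<noteq> 0}) at_top"
    unfolding normS_def
  proof (rule tendsto_infsum_dominated[OF summable_on_inverse_square_int])
    show "((\<lambda>\<alpha>. (real_of_int n)\<^sup>2 * (acoup \<alpha> n)\<^sup>2) \<longlongrightarrow> L n) at_top" if "n \<in> {n. n \<noteq> 0}" for n
      using that unfolding L_def by (intro tendsto_intros tendsto_acoup) simp
    show "\<forall>\<^sub>F \<alpha> in at_top. \<forall>n\<in>{n. n \<noteq> 0}. \<bar>(real_of_int n)\<^sup>2 * (acoup \<alpha> n)\<^sup>2\<bar> \<le> 1 / (real_of_int n)\<^sup>2"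
      using eventually_ge_at_top[of 2] by eventually_elim (simp add: normS_summand_le)
  qed
  also have "infsum L {n. n \<noteq> 0} = infsum L {-1, 1}"
    by (rule infsum_cong_neutral) (auto simp: L_def)
  also have "\<dots> = 2"
    by (simp add: L_def)
  finally show ?thesis .
qed

lemma coefA_summand_le:
  assumes "(u, v) \<in> idxUV" "2 \<le> \<alpha>"
  shows "(real_of_int u + real_of_int v)\<^sup>2 * (acoup \<alpha> (u + v))\<^sup>2 * (acoup \<alpha> u - acoup \<alpha> v)\<^sup>2
           \<le> 16 / (real_of_int u * real_of_int v)\<^sup>2"
proof -
  define x y where "x = real_of_int u" and "y = real_of_int v"
  define p q r where "p = 1 / \<bar>x\<bar>" and "q = 1 / \<bar>y\<bar>" and "r = 1 / \<bar>x + y\<bar>"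
  have xy: "1 \<le> \<bar>x\<bar>" "1 \<le> \<bar>y\<bar>" "1 \<le> \<bar>x + y\<bar>"
    using assms by (auto simp: idxUV_def x_def y_def)
  note tri = reciprocal_triangle[OF xy, folded p_def q_def r_def]
  have pqr: "0 \<le> p" "0 \<le> q" "0 \<le> r" "\<bar>x + y\<bar> * r = 1"
    using xy by (simp_all add: p_def q_def r_def)
  have le: "acoup \<alpha> (u + v) \<le> r\<^sup>2" "acoup \<alpha> u \<le> p\<^sup>2" "acoup \<alpha> v \<le> q\<^sup>2"
    using assms acoup_le[of "u + v" \<alpha>] acoup_le[of u \<alpha>] acoup_le[of v \<alpha>]
    by (auto simp: idxUV_def x_def y_def p_def q_def r_def power_divide)
  have "(acoup \<alpha> u - acoup \<alpha> v)\<^sup>2 \<le> (p\<^sup>2 + q\<^sup>2)\<^sup>2"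
    using le acoup_nonneg[of \<alpha> u] acoup_nonneg[of \<alpha> v]
    by (subst abs_le_square_iff[symmetric]) auto
  moreover have "(acoup \<alpha> (u + v))\<^sup>2 \<le> (r\<^sup>2)\<^sup>2"
    using le acoup_nonneg by (intro power_mono) auto
  ultimately have "(x + y)\<^sup>2 * (acoup \<alpha> (u + v))\<^sup>2 * (acoup \<alpha> u - acoup \<alpha> v)\<^sup>2
      \<le> (x + y)\<^sup>2 * (r\<^sup>2)\<^sup>2 * (p\<^sup>2 + q\<^sup>2)\<^sup>2"
    by (simp add: mult_mono)
  also have "\<dots> = (\<bar>x + y\<bar> * r)\<^sup>2 * (p * (p * r) + q * (q * r))\<^sup>2"
    by (simp add: power2_eq_square algebra_simps)
  also have "\<dots> \<le> 1 * (4 * (p * q))\<^sup>2"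
  proof -
    have "p * (p * r) + q * (q * r) \<le> 4 * (p * q)"
      using mult_left_mono[OF tri(1) pqr(1)] mult_left_mono[OF tri(2) pqr(2)]
      by (simp add: algebra_simps)
    moreover have "0 \<le> p * (p * r) + q * (q * r)"
      using pqr by simp
    ultimately show ?thesis
      using pqr(4) power_mono[of _ "4 * (p * q)" 2] by (simp add: power_mult_distrib)
  qed
  also have "\<dots> = 16 / (x * y)\<^sup>2"
    by (simp add: p_def q_def power2_eq_square field_simps)
  finally show ?thesis by (simp add: x_def y_def)
qed

lemma tendsto_coefA: "(coefA \<longlongrightarrow> 4) at_top"
proof -
  define L where "L = (\<lambda>(u, v). (real_of_int (u + v))\<^sup>2 * (of_bool (\<bar>u + v\<bar> = 1))\<^sup>2
                                  * (of_bool (\<bar>u\<bar> = 1) - of_bool (\<bar>v\<bar> = 1))\<^sup>2)"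
  have "(coefA \<longlongrightarrow> infsum L idxUV) at_top"
    unfolding coefA_def
    by (intro tendsto_infsum_dominated[OF summable_on_inverse_square_idxUV[of 16]]
        eventually_mono[OF eventually_ge_at_top[of 2]])
       (auto simp: idxUV_def L_def coefA_summand_le intro!: tendsto_intros tendsto_acoup)
  also have "infsum L idxUV = 4"
    by (subst infsum_idxUV_eq_sum_small) (auto simp: L_def)
  finally show ?thesis .
qed

lemma coefB_scaled_summand_le:
  assumes "(u, v) \<in> idxUV" "2 \<le> \<alpha>"
  defines "m \<equiv> u * v * (u + v)"
  shows "\<bar>(real_of_int u ^ 2 - real_of_int v ^ 2)
           * (2 powr \<alpha> * acoup \<alpha> (u * m) - 2 powr \<alpha> * acoup \<alpha> (v * m))\<bar>
         \<le> 32 / (real_of_int u * real_of_int v)\<^sup>2"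
proof -
  define x y where "x = real_of_int u" and "y = real_of_int v"
  define p q r where "p = 1 / \<bar>x\<bar>" and "q = 1 / \<bar>y\<bar>" and "r = 1 / \<bar>x + y\<bar>"
  have xy: "1 \<le> \<bar>x\<bar>" "1 \<le> \<bar>y\<bar>" "1 \<le> \<bar>x + y\<bar>"
    using assms by (auto simp: idxUV_def x_def y_def)
  note tri = reciprocal_triangle[OF xy, folded p_def q_def r_def]
  have pqr: "0 \<le> p" "0 \<le> q" "0 \<le> r" "\<bar>x + y\<bar> * r = 1"
    using xy by (simp_all add: p_def q_def r_def)
  have scaled_le: "2 powr \<alpha> * acoup \<alpha> (w * m) \<le> 4 * (1 / \<bar>real_of_int w\<bar> * (p * q * r))\<^sup>2"
    if "w \<noteq> 0" for w
  proof -
    have "2 \<le> \<bar>m\<bar>"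
      using assms two_le_abs_triple_product by (simp add: m_def)
    then have "2 \<le> \<bar>real_of_int (w * m)\<bar>"
      using abs_le_abs_mult[OF that, of m] by linarith
    with assms have "2 powr \<alpha> * acoup \<alpha> (w * m) \<le> (2 / real_of_int (w * m))\<^sup>2"
      by (intro scaled_acoup_le) auto
    also have "\<dots> = 4 * (1 / \<bar>real_of_int w\<bar> * (p * q * r))\<^sup>2"
      by (simp add: m_def x_def y_def p_def q_def r_def power_divide power_mult_distrib)
    finally show ?thesis .
  qed
  have "\<bar>(x\<^sup>2 - y\<^sup>2) * (2 powr \<alpha> * acoup \<alpha> (u * m) - 2 powr \<alpha> * acoup \<alpha> (v * m))\<bar>
      \<le> \<bar>x - y\<bar> * \<bar>x + y\<bar> * (4 * (p * (p * q * r))\<^sup>2 + 4 * (q * (p * q * r))\<^sup>2)"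
  proof -
    have "2 powr \<alpha> * acoup \<alpha> (u * m) \<le> 4 * (p * (p * q * r))\<^sup>2"
      "2 powr \<alpha> * acoup \<alpha> (v * m) \<le> 4 * (q * (p * q * r))\<^sup>2"
      using scaled_le[of u] scaled_le[of v] assms by (simp_all add: idxUV_def x_def y_def p_def q_def)
    moreover have "0 \<le> 2 powr \<alpha> * acoup \<alpha> (u * m)" "0 \<le> 2 powr \<alpha> * acoup \<alpha> (v * m)"
      by (simp_all add: acoup_nonneg)
    ultimately have "\<bar>2 powr \<alpha> * acoup \<alpha> (u * m) - 2 powr \<alpha> * acoup \<alpha> (v * m)\<bar>
        \<le> 4 * (p * (p * q * r))\<^sup>2 + 4 * (q * (p * q * r))\<^sup>2"
      by (simp add: abs_le_iff)
    moreover have "\<bar>x\<^sup>2 - y\<^sup>2\<bar> = \<bar>x - y\<bar> * \<bar>x + y\<bar>"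
      by (simp add: power2_eq_square algebra_simps flip: abs_mult)
    ultimately show ?thesis
      by (simp add: abs_mult mult_left_mono)
  qed
  also have "\<dots> = 4 * (\<bar>x - y\<bar> * p * q) * (\<bar>x + y\<bar> * r) * (p * q) * (p * (p * r) + q * (q * r))"
    by (simp add: power2_eq_square algebra_simps)
  also have "\<dots> \<le> 4 * 2 * 1 * (p * q) * (4 * (p * q))"
  proof -
    have "p * (p * r) + q * (q * r) \<le> 4 * (p * q)"
      using mult_left_mono[OF tri(1) pqr(1)] mult_left_mono[OF tri(2) pqr(2)]
      by (simp add: algebra_simps)
    then show ?thesis
      using tri(3) pqr by (intro mult_mono) auto
  qed
  also have "\<dots> = 32 / (x * y)\<^sup>2"
    by (simp add: p_def q_def power2_eq_square field_simps)
  finally show ?thesis by (simp add: x_def y_def)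
qed

lemma tendsto_scaled_coefB: "((\<lambda>\<alpha>. 2 powr \<alpha> * coefB \<alpha>) \<longlongrightarrow> -12) at_top"
proof -
  define f where "f \<alpha> = (\<lambda>(u, v). (real_of_int u ^ 2 - real_of_int v ^ 2)
      * (2 powr \<alpha> * acoup \<alpha> (u * (u * v * (u + v))) - 2 powr \<alpha> * acoup \<alpha> (v * (u * v * (u + v)))))"
    for \<alpha>
  define L where "L = (\<lambda>(u, v). (real_of_int u ^ 2 - real_of_int v ^ 2)
      * (of_bool (\<bar>real_of_int (u * (u * v * (u + v)))\<bar> = 2)
         - of_bool (\<bar>real_of_int (v * (u * v * (u + v)))\<bar> = 2)))"
  have "2 powr \<alpha> * coefB \<alpha> = infsum (f \<alpha>) idxUV" for \<alpha>
    unfolding coefB_def infsum_cmult_right'[symmetric]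
    by (intro infsum_cong) (auto simp: f_def acoup_mult right_diff_distrib mult_ac)
  moreover have "((\<lambda>\<alpha>. infsum (f \<alpha>) idxUV) \<longlongrightarrow> infsum L idxUV) at_top"
  proof (rule tendsto_infsum_dominated[OF summable_on_inverse_square_idxUV[of 32]])
    show "((\<lambda>\<alpha>. f \<alpha> z) \<longlongrightarrow> L z) at_top" if "z \<in> idxUV" for z
    proof -
      obtain u v where z: "z = (u, v)" "(u, v) \<in> idxUV"
        using \<open>z \<in> idxUV\<close> by (cases z) auto
      have "2 \<le> \<bar>u * v * (u + v)\<bar>" "\<bar>u * v * (u + v)\<bar> \<le> \<bar>u * (u * v * (u + v))\<bar>"
        "\<bar>u * v * (u + v)\<bar> \<le> \<bar>v * (u * v * (u + v))\<bar>"
        using two_le_abs_triple_product[OF z(2)] abs_le_abs_mult z(2) by (auto simp: idxUV_def)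
      then show ?thesis
        unfolding z f_def L_def prod.case
        by (intro tendsto_intros tendsto_scaled_acoup; linarith)
    qed
    show "\<forall>\<^sub>F \<alpha> in at_top. \<forall>z\<in>idxUV. \<bar>f \<alpha> z\<bar> \<le> (case z of (u, v) \<Rightarrow> 32 / (real_of_int u * real_of_int v)\<^sup>2)"
      using eventually_ge_at_top[of 2]
      by eventually_elim (auto simp: f_def coefB_scaled_summand_le)
  qed
  moreover have "infsum L idxUV = -12"
  proof (subst infsum_idxUV_eq_sum_small)
    show "L (u, v) = 0" if "(u, v) \<in> idxUV" "3 \<le> \<bar>u\<bar> \<or> 3 \<le> \<bar>v\<bar>" for u v
    proof -
      have "3 \<le> \<bar>u * (u * v * (u + v))\<bar>" "3 \<le> \<bar>v * (u * v * (u + v))\<bar>"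
        using abs_le_abs_triple_product[OF that(1)] abs_le_abs_mult[of u "u * v * (u + v)"]
          abs_le_abs_mult[of v "u * v * (u + v)"] that
        by (auto simp: idxUV_def)
      from this[THEN abs_of_int_neq_two] show ?thesis
        by (simp add: L_def)
    qed
  qed (simp add: L_def)
  ultimately show ?thesis by simp
qed

lemma coefC_scaled_summand_le:
  assumes "(u, v) \<in> idxUV" "2 \<le> \<alpha>"
  shows "(real_of_int u - real_of_int v)\<^sup>2 * (2 powr \<alpha> * acoup \<alpha> (u * v))\<^sup>2
           \<le> 64 / (real_of_int u * real_of_int v)\<^sup>2"
proof (cases "2 \<le> \<bar>u * v\<bar>")
  case True
  define x y where "x = real_of_int u" and "y = real_of_int v"
  define p q where "p = 1 / \<bar>x\<bar>" and "q = 1 / \<bar>y\<bar>"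
  have xy: "1 \<le> \<bar>x\<bar>" "1 \<le> \<bar>y\<bar>" "1 \<le> \<bar>x + y\<bar>"
    using assms by (auto simp: idxUV_def x_def y_def)
  have pq: "0 \<le> p" "0 \<le> q"
    by (simp_all add: p_def q_def)
  have "2 powr \<alpha> * acoup \<alpha> (u * v) \<le> (2 / real_of_int (u * v))\<^sup>2"
    using True assms by (intro scaled_acoup_le) linarith+
  also have "\<dots> = 4 * (p * q)\<^sup>2"
    by (simp add: x_def y_def p_def q_def power_divide power_mult_distrib)
  finally have "(2 powr \<alpha> * acoup \<alpha> (u * v))\<^sup>2 \<le> (4 * (p * q)\<^sup>2)\<^sup>2"
    by (rule power_mono) (simp add: acoup_nonneg)
  then have "(x - y)\<^sup>2 * (2 powr \<alpha> * acoup \<alpha> (u * v))\<^sup>2 \<le> (x - y)\<^sup>2 * (4 * (p * q)\<^sup>2)\<^sup>2"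
    by (rule mult_left_mono) simp
  also have "\<dots> = 16 * (\<bar>x - y\<bar> * p * q)\<^sup>2 * (p * q)\<^sup>2"
    by (simp add: power_mult_distrib power2_eq_square)
  also have "\<dots> \<le> 16 * 2\<^sup>2 * (p * q)\<^sup>2"
    using reciprocal_triangle(3)[OF xy] pq
    by (intro mult_right_mono mult_left_mono power_mono) (auto simp: p_def q_def)
  also have "\<dots> = 64 / (x * y)\<^sup>2"
    by (simp add: p_def q_def power2_eq_square field_simps)
  finally show ?thesis by (simp add: x_def y_def)
next
  case False
  with assms have "u = v"
    by (intro eq_if_abs_product_less_two) auto
  then show ?thesis by simp
qed

lemma tendsto_scaled_coefC: "((\<lambda>\<alpha>. 4 powr \<alpha> * coefC \<alpha>) \<longlongrightarrow> 40) at_top"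
proof -
  define f where "f \<alpha> = (\<lambda>(u, v). (real_of_int u - real_of_int v)\<^sup>2 * (2 powr \<alpha> * acoup \<alpha> (u * v))\<^sup>2)"
    for \<alpha>
  define L where "L = (\<lambda>(u, v). (real_of_int u - real_of_int v)\<^sup>2
                                  * (of_bool (\<bar>real_of_int (u * v)\<bar> = 2))\<^sup>2)"
  have "4 powr \<alpha> * coefC \<alpha> = infsum (f \<alpha>) idxUV" for \<alpha>
    unfolding coefC_def infsum_cmult_right'[symmetric]
    by (intro infsum_cong) (auto simp: f_def four_powr acoup_mult power_mult_distrib)
  moreover have "((\<lambda>\<alpha>. infsum (f \<alpha>) idxUV) \<longlongrightarrow> infsum L idxUV) at_top"
  proof (rule tendsto_infsum_dominated[OF summable_on_inverse_square_idxUV[of 64]])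
    show "((\<lambda>\<alpha>. f \<alpha> z) \<longlongrightarrow> L z) at_top" if "z \<in> idxUV" for z
    proof -
      obtain u v where z: "z = (u, v)" "(u, v) \<in> idxUV"
        using \<open>z \<in> idxUV\<close> by (cases z) auto
      show ?thesis
      proof (cases "2 \<le> \<bar>u * v\<bar>")
        case True
        then show ?thesis
          unfolding z f_def L_def prod.case
          by (intro tendsto_intros tendsto_scaled_acoup) linarith+
      next
        case False
        with z have "u = v"
          by (intro eq_if_abs_product_less_two) auto
        then show ?thesis
          by (simp add: z f_def L_def)
      qed
    qed
    show "\<forall>\<^sub>F \<alpha> in at_top. \<forall>z\<in>idxUV. \<bar>f \<alpha> z\<bar> \<le> (case z of (u, v) \<Rightarrow> 64 / (real_of_int u * real_of_int v)\<^sup>2)"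
      using eventually_ge_at_top[of 2]
      by eventually_elim (auto simp: f_def coefC_scaled_summand_le)
  qed
  moreover have "infsum L idxUV = 40"
  proof (subst infsum_idxUV_eq_sum_small)
    show "L (u, v) = 0" if "(u, v) \<in> idxUV" "3 \<le> \<bar>u\<bar> \<or> 3 \<le> \<bar>v\<bar>" for u v
    proof -
      have "3 \<le> \<bar>u * v\<bar>"
        using that abs_le_abs_product[OF that(1)] by linarith
      from this[THEN abs_of_int_neq_two] show ?thesis
        by (simp add: L_def)
    qed
  qed (simp add: L_def)
  ultimately show ?thesis by simp
qed

lemma scaled_tau_eff_inv_eq:
  "2 powr \<alpha> * tau_eff_inv \<alpha> \<Delta> = (1 / 2) * sqrt ((coefA \<alpha> * (2 powr \<alpha> * \<Delta>)\<^sup>2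
      + 2 * (2 powr \<alpha> * coefB \<alpha>) * (2 powr \<alpha> * \<Delta>) + 4 powr \<alpha> * coefC \<alpha>) / normS \<alpha>)"
proof -
  have "2 powr \<alpha> = sqrt (4 powr \<alpha>)"
    by (simp add: four_powr)
  then have "2 powr \<alpha> * tau_eff_inv \<alpha> \<Delta> = (1 / 2) * sqrt (4 powr \<alpha>
      * ((coefA \<alpha> * \<Delta>\<^sup>2 + 2 * coefB \<alpha> * \<Delta> + coefC \<alpha>) / normS \<alpha>))"
    unfolding tau_eff_inv_def real_sqrt_mult by simp
  then show ?thesis
    by (simp add: four_powr power2_eq_square algebra_simps add_divide_distrib)
qed

lemma tendsto_scaled_tau_eff_inv:
  assumes "((\<lambda>\<alpha>. 2 powr \<alpha> * \<Delta> \<alpha>) \<longlongrightarrow> x) at_top"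
  shows "((\<lambda>\<alpha>. 2 powr \<alpha> * tau_eff_inv \<alpha> (\<Delta> \<alpha>)) \<longlongrightarrow> sqrt (((x - 3)\<^sup>2 + 1) / 2)) at_top"
proof -
  have "((\<lambda>\<alpha>. 2 powr \<alpha> * tau_eff_inv \<alpha> (\<Delta> \<alpha>))
        \<longlongrightarrow> (1 / 2) * sqrt ((4 * x\<^sup>2 + 2 * (-12) * x + 40) / 2)) at_top"
    unfolding scaled_tau_eff_inv_eq
    by (intro tendsto_intros tendsto_coefA tendsto_scaled_coefB tendsto_scaled_coefC
        tendsto_normS assms) simp
  also have "(1 / 2) * sqrt ((4 * x\<^sup>2 + 2 * (-12) * x + 40) / 2) = sqrt (((x - 3)\<^sup>2 + 1) / 2)"
  proof -
    have "(4 * x\<^sup>2 + 2 * (-12) * x + 40) / 2 / 4 = ((x - 3)\<^sup>2 + 1) / 2"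
      by (simp add: power2_eq_square field_simps)
    then show ?thesis
      by (metis real_sqrt_divide real_sqrt_four times_divide_eq_left mult_1)
  qed
  finally show ?thesis .
qed

lemma tendsto_tau_eff_inv_over_abs:
  assumes "filterlim (\<lambda>\<alpha>. 2 powr \<alpha> * \<Delta> \<alpha>) at_infinity at_top"
  shows "((\<lambda>\<alpha>. tau_eff_inv \<alpha> (\<Delta> \<alpha>) / (\<bar>\<Delta> \<alpha>\<bar> / sqrt 2)) \<longlongrightarrow> 1) at_top"
proof -
  define y where "y \<alpha> = inverse (2 powr \<alpha> * \<Delta> \<alpha>)" for \<alpha>
  have y: "(y \<longlongrightarrow> 0) at_top"
    unfolding y_def by (rule filterlim_compose[OF tendsto_inverse_0 assms])
  have "((\<lambda>\<alpha>. (sqrt 2 / 2) * sqrt ((coefA \<alpha> + 2 * (2 powr \<alpha> * coefB \<alpha>) * y \<alpha>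
          + 4 powr \<alpha> * coefC \<alpha> * (y \<alpha>)\<^sup>2) / normS \<alpha>))
        \<longlongrightarrow> (sqrt 2 / 2) * sqrt ((4 + 2 * (-12) * 0 + 40 * 0\<^sup>2) / 2)) at_top"
    by (intro tendsto_intros tendsto_coefA tendsto_scaled_coefB tendsto_scaled_coefC
        tendsto_normS y) simp
  moreover have "(sqrt 2 / 2) * sqrt ((4 + 2 * (-12) * 0 + 40 * 0\<^sup>2) / 2) = (1 :: real)"
    by simp
  moreover have "\<forall>\<^sub>F \<alpha> in at_top. (sqrt 2 / 2) * sqrt ((coefA \<alpha> + 2 * (2 powr \<alpha> * coefB \<alpha>) * y \<alpha>
          + 4 powr \<alpha> * coefC \<alpha> * (y \<alpha>)\<^sup>2) / normS \<alpha>)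
        = tau_eff_inv \<alpha> (\<Delta> \<alpha>) / (\<bar>\<Delta> \<alpha>\<bar> / sqrt 2)"
    using filterlim_at_infinity_imp_eventually_ne[OF assms, of 0]
  proof eventually_elim
    case (elim \<alpha>)
    then have "\<Delta> \<alpha> \<noteq> 0"
      by simp
    define P where "P = coefA \<alpha> * (\<Delta> \<alpha>)\<^sup>2 + 2 * coefB \<alpha> * \<Delta> \<alpha> + coefC \<alpha>"
    have "coefA \<alpha> + 2 * (2 powr \<alpha> * coefB \<alpha>) * y \<alpha> + 4 powr \<alpha> * coefC \<alpha> * (y \<alpha>)\<^sup>2
        = P / (\<Delta> \<alpha>)\<^sup>2"
      using \<open>\<Delta> \<alpha> \<noteq> 0\<close> by (simp add: P_def y_def four_powr field_simps power2_eq_square)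
    then have "sqrt ((coefA \<alpha> + 2 * (2 powr \<alpha> * coefB \<alpha>) * y \<alpha> + 4 powr \<alpha> * coefC \<alpha> * (y \<alpha>)\<^sup>2)
        / normS \<alpha>) = sqrt (P / normS \<alpha>) / \<bar>\<Delta> \<alpha>\<bar>"
      by (simp add: real_sqrt_divide real_sqrt_mult)
    then show ?case
      by (simp add: tau_eff_inv_def P_def)
  qed
  ultimately show ?thesis
    by (auto intro: Lim_transform_eventually)
qed

theorem mainTheorem4:
  fixes c k :: real and \<Delta> :: "real \<Rightarrow> real"
  assumes hc: "c > 1"
    and hlim: "((\<lambda>\<alpha>. c powr \<alpha> * \<Delta> \<alpha>) \<longlongrightarrow> k) at_top"
  shows "(c < 2 \<and> k \<noteq> 0 \<longrightarrow>
           ((\<lambda>\<alpha>. tau_eff_inv \<alpha> (\<Delta> \<alpha>) / (\<bar>\<Delta> \<alpha>\<bar> / sqrt 2)) \<longlongrightarrow> 1) at_top)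
       \<and> (c = 2 \<longrightarrow>
           ((\<lambda>\<alpha>. 2 powr \<alpha> * tau_eff_inv \<alpha> (\<Delta> \<alpha>)) \<longlongrightarrow> sqrt (((k - 3)\<^sup>2 + 1) / 2)) at_top)
       \<and> (c > 2 \<longrightarrow>
           ((\<lambda>\<alpha>. 2 powr \<alpha> * tau_eff_inv \<alpha> (\<Delta> \<alpha>)) \<longlongrightarrow> sqrt 5) at_top)
       \<and> ((\<lambda>\<alpha>. 2 powr \<alpha> * tau_eff_inv \<alpha> (- coefB \<alpha> / coefA \<alpha>)) \<longlongrightarrow> 1 / sqrt 2) at_top
       \<and> ((\<lambda>\<alpha>. 2 powr \<alpha> * tau_eff_inv \<alpha> (exp (2 - \<alpha>))) \<longlongrightarrow> sqrt 5) at_top"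
proof (intro conjI impI)
  have rescale: "2 powr \<alpha> * \<Delta> \<alpha> = c powr \<alpha> * \<Delta> \<alpha> * (2 / c) powr \<alpha>" for \<alpha>
    using hc by (simp add: powr_divide)
  show "((\<lambda>\<alpha>. tau_eff_inv \<alpha> (\<Delta> \<alpha>) / (\<bar>\<Delta> \<alpha>\<bar> / sqrt 2)) \<longlongrightarrow> 1) at_top" if "c < 2 \<and> k \<noteq> 0"
  proof (rule tendsto_tau_eff_inv_over_abs)
    show "filterlim (\<lambda>\<alpha>. 2 powr \<alpha> * \<Delta> \<alpha>) at_infinity at_top"
      unfolding rescale using that hc
      by (intro tendsto_mult_filterlim_at_infinity[OF hlim] filterlim_at_top_imp_at_infinity
          filterlim_powr_at_top) (simp_all add: field_simps)
  qed
  show "((\<lambda>\<alpha>. 2 powr \<alpha> * tau_eff_inv \<alpha> (\<Delta> \<alpha>)) \<longlongrightarrow> sqrt (((k - 3)\<^sup>2 + 1) / 2)) at_top" if "c = 2"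
    using tendsto_scaled_tau_eff_inv[of \<Delta> k] hlim that by simp
  show "((\<lambda>\<alpha>. 2 powr \<alpha> * tau_eff_inv \<alpha> (\<Delta> \<alpha>)) \<longlongrightarrow> sqrt 5) at_top" if "c > 2"
  proof -
    have "((\<lambda>\<alpha>. c powr \<alpha> * \<Delta> \<alpha> * (2 / c) powr \<alpha>) \<longlongrightarrow> k * 0) at_top"
      using that by (intro tendsto_mult hlim tendsto_powr_at_top_zero) auto
    from tendsto_scaled_tau_eff_inv[of \<Delta> 0] this show ?thesis
      by (simp add: rescale)
  qed
  have "((\<lambda>\<alpha>. 2 powr \<alpha> * (- coefB \<alpha> / coefA \<alpha>)) \<longlongrightarrow> - (-12) / 4) at_top"
    using tendsto_divide[OF tendsto_minus[OF tendsto_scaled_coefB] tendsto_coefA] by simp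
  from tendsto_scaled_tau_eff_inv[OF this]
  show "((\<lambda>\<alpha>. 2 powr \<alpha> * tau_eff_inv \<alpha> (- coefB \<alpha> / coefA \<alpha>)) \<longlongrightarrow> 1 / sqrt 2) at_top"
    by (simp add: real_sqrt_divide)
  have "((\<lambda>\<alpha>::real. 2 powr \<alpha> * exp (2 - \<alpha>)) \<longlongrightarrow> 0) at_top"
    using ln_2_less_1 by real_asymp
  from tendsto_scaled_tau_eff_inv[OF this]
  show "((\<lambda>\<alpha>. 2 powr \<alpha> * tau_eff_inv \<alpha> (exp (2 - \<alpha>))) \<longlongrightarrow> sqrt 5) at_top"
    by simp
qed

end
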